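(* Let $\mathcal{D}=\{t_1,\dots,t_n\}$ be a relational database whose tables are indexed according to a topological order of its (acyclic) foreign-key graph, and let $\preceq^*$ (ascend-or-equal) and $\preceq$ (affect-or-equal) be the relations on $\mathcal{D}$ defined below. Then $\preceq$ is a partial order on $\mathcal{D}$ (reflexive, antisymmetric and transitive).
   Context: A relational database is a finite set of tables $t_1,\dots,t_n$. A foreign key constraint $\phi_{ij}$ means that table $t_i$ is a parent of table $t_j$ (i.e. $t_j$ references $t_i$); $\Phi_j$ denotes the set of all foreign key constraints on $t_j$. The directed graph whose vertices are the tables and with an edge from $t_i$ to $t_j$ whenever some $\phi_{ij}\in\Phi_j$ is assumed acyclic, and the indices are chosen according to a topological order of this graph, so that $\phi_{ij}\in\Phi_j$ implies $i<j$. Write $\mathbb{N}_m=\{1,2,\dots,m\}$. The relation ascend-or-equal $\preceq^*$ is defined by: $t_i\preceq^* t_j$ iff $i=j$, or there exists $k\in\mathbb{N}_n$ with $\phi_{ik}\in\Phi_k$ and $t_k\preceq^* t_j$ (i.e. $t_i$ equals $t_j$ or is an ancestor of $t_j$). The relation affect-or-equal $\preceq$ is the (smallest) relation satisfying: $t_i\preceq t_j$ iff $t_i\preceq^* t_j$, or [$i<j$ and there exists $k\in\mathbb{N}_{j-1}\setminus\{i\}$ such that ($t_i\preceq t_k$ or $t_k\preceq t_i$) and $t_k\preceq t_j$]. *)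

theory Defs
  imports Main
begin

text \<open>Tables t_1..t_n are represented by their indices 1..n.
  fk i j means: some foreign key constraint phi_ij is in Phi_j (t_i is a parent of t_j).\<close>

inductive ascend_eq :: "nat \<Rightarrow> (nat \<Rightarrow> nat \<Rightarrow> bool) \<Rightarrow> nat \<Rightarrow> nat \<Rightarrow> bool"
  for n :: nat and fk :: "nat \<Rightarrow> nat \<Rightarrow> bool" where
  refl: "i \<in> {1..n} \<Longrightarrow> ascend_eq n fk i i"
| step: "k \<in> {1..n} \<Longrightarrow> fk i k \<Longrightarrow> ascend_eq n fk k j \<Longrightarrow> ascend_eq n fk i j"

inductive affect_eq :: "nat \<Rightarrow> (nat \<Rightarrow> nat \<Rightarrow> bool) \<Rightarrow> nat \<Rightarrow> nat \<Rightarrow> bool"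
  for n :: nat and fk :: "nat \<Rightarrow> nat \<Rightarrow> bool" where
  asc: "ascend_eq n fk i j \<Longrightarrow> affect_eq n fk i j"
| via: "i < j \<Longrightarrow> k \<in> {1..j-1} - {i} \<Longrightarrow>
        (affect_eq n fk i k \<or> affect_eq n fk k i) \<Longrightarrow> affect_eq n fk k j \<Longrightarrow>
        affect_eq n fk i j"

end

theory Submission
  imports Defs
begin

text \<open>Since every foreign key points from a smaller to a larger index, both relations only
  relate tables \<open>t\<^sub>i, t\<^sub>j\<close> with \<open>i \<le> j\<close>; this gives antisymmetry. Transitivity is
  built into the second clause of \<open>\<preceq>\<close>: from \<open>t\<^sub>i \<preceq> t\<^sub>k \<preceq> t\<^sub>j\<close> with \<open>i < k < j\<close> the
  intermediate table \<open>t\<^sub>k\<close> is a valid witness.\<close>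

lemma ascend_eq_field_le:
  assumes fk_up: "\<And>i j. fk i j \<Longrightarrow> i \<in> {1..n} \<and> j \<in> {1..n} \<and> i < j"
    and "ascend_eq n fk i j"
  shows "i \<in> {1..n} \<and> j \<in> {1..n} \<and> i \<le> j"
  using assms(2)
proof (induction rule: ascend_eq.induct)
  case (refl i)
  then show ?case by simp
next
  case (step k i j)
  then show ?case using fk_up[of i k] by auto
qed

lemma affect_eq_field_le:
  assumes fk_up: "\<And>i j. fk i j \<Longrightarrow> i \<in> {1..n} \<and> j \<in> {1..n} \<and> i < j"
    and "affect_eq n fk i j"
  shows "i \<in> {1..n} \<and> j \<in> {1..n} \<and> i \<le> j"
  using assms(2)
proof (induction rule: affect_eq.induct)
  case (asc i j)
  then show ?case using ascend_eq_field_le[OF fk_up] by blast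
next
  case (via i j k)
  then show ?case by auto
qed

lemma affect_eq_refl: "i \<in> {1..n} \<Longrightarrow> affect_eq n fk i i"
  by (intro affect_eq.asc ascend_eq.refl)

lemma affect_eq_antisym:
  assumes fk_up: "\<And>i j. fk i j \<Longrightarrow> i \<in> {1..n} \<and> j \<in> {1..n} \<and> i < j"
    and "affect_eq n fk i j" and "affect_eq n fk j i"
  shows "i = j"
  using affect_eq_field_le[OF fk_up assms(2)] affect_eq_field_le[OF fk_up assms(3)] by simp

lemma affect_eq_trans:
  assumes fk_up: "\<And>i j. fk i j \<Longrightarrow> i \<in> {1..n} \<and> j \<in> {1..n} \<and> i < j"
    and ik: "affect_eq n fk i k" and kj: "affect_eq n fk k j"
  shows "affect_eq n fk i j"
proof (cases "i = k \<or> k = j")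
  case True
  then show ?thesis using ik kj by auto
next
  case False
  with affect_eq_field_le[OF fk_up ik] affect_eq_field_le[OF fk_up kj]
  have "i < j" and "k \<in> {1..j-1} - {i}" by auto
  then show ?thesis using ik kj by (blast intro: affect_eq.via)
qed

theorem lemma3p3:
  fixes n :: nat and fk :: "nat \<Rightarrow> nat \<Rightarrow> bool"
  assumes "\<And>i j. fk i j \<Longrightarrow> i \<in> {1..n} \<and> j \<in> {1..n} \<and> i < j"
  shows "partial_order_on {1..n} {(i, j). affect_eq n fk i j}"
proof -
  let ?R = "{(i, j). affect_eq n fk i j}"
  have "?R \<subseteq> {1..n} \<times> {1..n}"
    using affect_eq_field_le[OF assms] by blast
  moreover have "refl_on {1..n} ?R"
    by (simp add: refl_on_def affect_eq_refl)
  moreover have "trans ?R"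
    by (auto intro: transI affect_eq_trans[OF assms])
  moreover have "antisym ?R"
    by (auto intro: antisymI affect_eq_antisym[OF assms])
  ultimately show ?thesis
    unfolding partial_order_on_def preorder_on_def by blast
qed

end
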